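(* Let $V$ be a vector space over a field $\mathbb{K}$ of characteristic $0$, let $F$ be a bilinear form on $V$, and set $a_F=a_1^F$. Then $\lambda_F=\exp(a_F)=\sum_{n\ge0}\frac{1}{n!}a_F^n$, where the series is finite when applied to any element of $\mathcal{T}(V)$.
   Context: $\mathcal{T}(V)$ is the tensor algebra of $V$. $a_1^F$ is the linear map on $\mathcal{T}(V)$ with $a_1^F(x_1\otimes\cdots\otimes x_p)=0$ for $p<2$ and $a_1^F(x_1\otimes\cdots\otimes x_p)=\sum_{1\le i<j\le p}(-1)^{i+j-1}F(x_i,x_j)\,x_1\otimes\cdots\widehat{x_i}\cdots\widehat{x_j}\cdots\otimes x_p$ for $p\ge2$. For $f\in V^*$, $i_f$ is the unique linear map on $\mathcal{T}(V)$ with $i_f(1)=0$ and $i_f(x\otimes u)=f(x)u-x\otimes i_f(u)$ ($x\in V$); $i_x^F:=i_{f_x}$ with $f_x(y)=F(x,y)$. $\Lambda_F:\mathcal{T}(V)\to\mathrm{End}(\mathcal{T}(V))$ is the unique unital algebra homomorphism with $\Lambda_F(x)(u)=x\otimes u+i_x^F(u)$ for $x\in V$, and $\lambda_F(u):=\Lambda_F(u)(1)$. *)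

theory Defs
  imports Complex_Main "HOL.Vector_Spaces" "HOL-Library.Function_Algebras"
begin

text \<open>The tensor algebra T(V) is realised as the free K-module on words
  ('v list \<Rightarrow> 'k, finitely supported) modulo the subspace tensor_rel generated by
  the multilinearity relations. Equality in T(V) is membership of the difference in
  tensor_rel.\<close>

definition tsupp :: "('v list \<Rightarrow> 'k::zero) \<Rightarrow> 'v list set" where
  "tsupp u = {w. u w \<noteq> 0}"

definition tsingle :: "'v list \<Rightarrow> 'v list \<Rightarrow> 'k::zero_neq_one" where
  "tsingle w = (\<lambda>w'. if w' = w then 1 else 0)"

definition tsmul :: "'k::times \<Rightarrow> ('v list \<Rightarrow> 'k) \<Rightarrow> 'v list \<Rightarrow> 'k" where
  "tsmul c u = (\<lambda>w. c * u w)"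

definition lin_ext :: "('v list \<Rightarrow> 'v list \<Rightarrow> 'k::comm_ring_1) \<Rightarrow> ('v list \<Rightarrow> 'k) \<Rightarrow> 'v list \<Rightarrow> 'k" where
  "lin_ext L u = (\<Sum>w\<in>tsupp u. tsmul (u w) (L w))"

definition tmul_left :: "'v \<Rightarrow> ('v list \<Rightarrow> 'k::zero) \<Rightarrow> 'v list \<Rightarrow> 'k" where
  "tmul_left x u = (\<lambda>w. case w of [] \<Rightarrow> 0 | y # w' \<Rightarrow> if y = x then u w' else 0)"

inductive_set tensor_rel :: "('k::field \<Rightarrow> 'v::ab_group_add \<Rightarrow> 'v) \<Rightarrow> ('v list \<Rightarrow> 'k) set"
  for scale :: "'k::field \<Rightarrow> 'v::ab_group_add \<Rightarrow> 'v" where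
  zero: "0 \<in> tensor_rel scale"
| add: "u \<in> tensor_rel scale \<Longrightarrow> v \<in> tensor_rel scale \<Longrightarrow> u + v \<in> tensor_rel scale"
| smul: "u \<in> tensor_rel scale \<Longrightarrow> tsmul c u \<in> tensor_rel scale"
| additive: "tsingle (w1 @ (x + y) # w2) - tsingle (w1 @ x # w2) - tsingle (w1 @ y # w2)
              \<in> tensor_rel scale"
| homog: "tsingle (w1 @ scale c x # w2) - tsmul c (tsingle (w1 @ x # w2)) \<in> tensor_rel scale"

definition bilinear_form :: "('k::field \<Rightarrow> 'v::ab_group_add \<Rightarrow> 'v) \<Rightarrow> ('v \<Rightarrow> 'v \<Rightarrow> 'k) \<Rightarrow> bool" where
  "bilinear_form scale F \<longleftrightarrow>
     (\<forall>x y z. F (x + y) z = F x z + F y z) \<and>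
     (\<forall>x y z. F x (y + z) = F x y + F x z) \<and>
     (\<forall>c x y. F (scale c x) y = c * F x y) \<and>
     (\<forall>c x y. F x (scale c y) = c * F x y)"

primrec contr_word :: "('v \<Rightarrow> 'k::comm_ring_1) \<Rightarrow> 'v list \<Rightarrow> 'v list \<Rightarrow> 'k" where
  "contr_word f [] = 0"
| "contr_word f (x # w) = tsmul (f x) (tsingle w) - tmul_left x (contr_word f w)"

definition contr :: "('v \<Rightarrow> 'k::comm_ring_1) \<Rightarrow> ('v list \<Rightarrow> 'k) \<Rightarrow> 'v list \<Rightarrow> 'k" where
  "contr f = lin_ext (contr_word f)"

definition Lambda_gen :: "('v \<Rightarrow> 'v \<Rightarrow> 'k::comm_ring_1) \<Rightarrow> 'v \<Rightarrow> ('v list \<Rightarrow> 'k) \<Rightarrow> 'v list \<Rightarrow> 'k" where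
  "Lambda_gen F x u = tmul_left x u + contr (F x) u"

definition Lambda_word :: "('v \<Rightarrow> 'v \<Rightarrow> 'k::comm_ring_1) \<Rightarrow> 'v list \<Rightarrow> ('v list \<Rightarrow> 'k) \<Rightarrow> 'v list \<Rightarrow> 'k" where
  "Lambda_word F w = foldr (\<lambda>x g. Lambda_gen F x \<circ> g) w id"

definition lambdaF :: "('v \<Rightarrow> 'v \<Rightarrow> 'k::comm_ring_1) \<Rightarrow> ('v list \<Rightarrow> 'k) \<Rightarrow> 'v list \<Rightarrow> 'k" where
  "lambdaF F = lin_ext (\<lambda>w. Lambda_word F w (tsingle []))"

definition del2 :: "nat \<Rightarrow> nat \<Rightarrow> 'v list \<Rightarrow> 'v list" where
  "del2 i j w = [w ! k. k \<leftarrow> [0..<length w], k \<noteq> i, k \<noteq> j]"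

text \<open>a_1^F on words; with 0-based indices the sign (-1)^(i+j-1) becomes (-1)^(i+j+1).\<close>
definition aF_word :: "('v \<Rightarrow> 'v \<Rightarrow> 'k::comm_ring_1) \<Rightarrow> 'v list \<Rightarrow> 'v list \<Rightarrow> 'k" where
  "aF_word F w = (\<Sum>(i, j)\<in>{(i, j). i < j \<and> j < length w}.
       tsmul ((-1) ^ (i + j + 1) * F (w ! i) (w ! j)) (tsingle (del2 i j w)))"

definition aF :: "('v \<Rightarrow> 'v \<Rightarrow> 'k::comm_ring_1) \<Rightarrow> ('v list \<Rightarrow> 'k) \<Rightarrow> 'v list \<Rightarrow> 'k" where
  "aF F = lin_ext (aF_word F)"

end

theory Submission
  imports Defs
begin

text \<open>The identity already holds in the free module on words. Writing a = a_F and i_x = i_x^F, splitting off the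
  first letter gives a(x \<otimes> w) = x \<otimes> a(w) + i_x(w). Contractions anticommute, hence commute
  with a, and by induction a^n(x \<otimes> v) = x \<otimes> a^n(v) + n i_x(a^(n-1)(v)). Consequently the
  truncated exponential E = \<Sum>n<M. a^n/n! satisfies E(x \<otimes> v) = x \<otimes> E(v) + i_x(E(v))
  = \<Lambda>_F(x)(E(v)), so E(w) = \<lambda>_F(w) for every word w by induction on its length, once M
  exceeds that length. Finally a shortens words, so a^n(u) = 0 for large n.\<close>

lemma sum_fun_apply: "(\<Sum>i\<in>I. f i) x = (\<Sum>i\<in>I. f i x)"
  by (induction I rule: infinite_finite_induct) auto

declare plus_fun_apply[simp del] zero_fun_apply[simp del] minus_apply[simp del]
  uminus_apply[simp del]

lemma tsmul_apply: "tsmul c u w = c * u w"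
  by (simp add: tsmul_def)

lemmas tensor_apply_simps =
  plus_fun_apply zero_fun_apply minus_apply uminus_apply sum_fun_apply tsmul_apply

abbreviation finsupp :: "('v list \<Rightarrow> 'k::zero) \<Rightarrow> bool" where
  "finsupp u \<equiv> finite (tsupp u)"

lemma finsupp_zero [simp]: "finsupp (0 :: 'v list \<Rightarrow> 'k::zero)"
  by (simp add: tensor_apply_simps tsupp_def)

lemma finsupp_add [simp]:
  "finsupp u \<Longrightarrow> finsupp v \<Longrightarrow> finsupp (u + v :: 'v list \<Rightarrow> 'k::comm_monoid_add)"
  by (rule finite_subset[of _ "tsupp u \<union> tsupp v"]) (auto simp: tensor_apply_simps tsupp_def)

lemma finsupp_uminus [simp]: "finsupp (- u :: 'v list \<Rightarrow> 'k::ab_group_add) = finsupp u"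
  by (simp add: tensor_apply_simps tsupp_def)

lemma finsupp_diff [simp]:
  "finsupp u \<Longrightarrow> finsupp v \<Longrightarrow> finsupp (u - v :: 'v list \<Rightarrow> 'k::ab_group_add)"
  by (rule finite_subset[of _ "tsupp u \<union> tsupp v"]) (auto simp: tensor_apply_simps tsupp_def)

lemma finsupp_tsmul [simp]: "finsupp u \<Longrightarrow> finsupp (tsmul c u :: 'v list \<Rightarrow> 'k::comm_ring_1)"
  by (rule finite_subset[of _ "tsupp u"]) (auto simp: tensor_apply_simps tsupp_def)

lemma finsupp_tsingle [simp]: "finsupp (tsingle w :: 'v list \<Rightarrow> 'k::zero_neq_one)"
  by (rule finite_subset[of _ "{w}"]) (auto simp: tsupp_def tsingle_def)

lemma finsupp_sum:
  "(\<And>i. i \<in> I \<Longrightarrow> finsupp (g i)) \<Longrightarrow> finsupp (\<Sum>i\<in>I. g i :: 'v list \<Rightarrow> 'k::ab_group_add)"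
  by (induction I rule: infinite_finite_induct) auto

lemma finsupp_tmul_left [simp]: "finsupp u \<Longrightarrow> finsupp (tmul_left x u)"
proof (rule finite_subset)
  show "tsupp (tmul_left x u) \<subseteq> (#) x ` tsupp u"
  proof
    fix w assume "w \<in> tsupp (tmul_left x u)"
    then show "w \<in> (#) x ` tsupp u"
      by (cases w) (auto simp: tsupp_def tmul_left_def split: if_splits)
  qed
qed simp

lemma tmul_left_add [simp]:
  "tmul_left x (u + v) = tmul_left x u + tmul_left x (v :: 'v list \<Rightarrow> 'k::comm_monoid_add)"
  by (rule ext) (auto simp: tensor_apply_simps tmul_left_def split: list.splits)

lemma tmul_left_uminus [simp]:
  "tmul_left x (- v) = - tmul_left x (v :: 'v list \<Rightarrow> 'k::ab_group_add)"
  by (rule ext) (auto simp: tensor_apply_simps tmul_left_def split: list.splits)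

lemma tmul_left_zero [simp]: "tmul_left x 0 = (0 :: 'v list \<Rightarrow> 'k::comm_monoid_add)"
  by (rule ext) (auto simp: tensor_apply_simps tmul_left_def split: list.splits)

lemma tmul_left_tsmul [simp]:
  "tmul_left x (tsmul c u) = tsmul c (tmul_left x (u :: 'v list \<Rightarrow> 'k::comm_ring_1))"
  by (rule ext) (auto simp: tensor_apply_simps tmul_left_def split: list.splits)

lemma tmul_left_sum:
  "tmul_left x (\<Sum>i\<in>I. g i) = (\<Sum>i\<in>I. tmul_left x (g i :: 'v list \<Rightarrow> 'k::ab_group_add))"
  by (induction I rule: infinite_finite_induct) auto

lemma tmul_left_tsingle [simp]:
  "tmul_left x (tsingle w) = (tsingle (x # w) :: 'v list \<Rightarrow> 'k::zero_neq_one)"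
  by (rule ext) (auto simp: tmul_left_def tsingle_def split: list.splits)

lemma tsmul_add [simp]: "tsmul c (u + v) = tsmul c u + tsmul c (v :: 'v list \<Rightarrow> 'k::comm_ring_1)"
  by (rule ext) (simp add: tensor_apply_simps algebra_simps)

lemma tsmul_diff [simp]: "tsmul c (u - v) = tsmul c u - tsmul c (v :: 'v list \<Rightarrow> 'k::comm_ring_1)"
  by (rule ext) (simp add: tensor_apply_simps algebra_simps)

lemma tsmul_zero [simp]: "tsmul c 0 = (0 :: 'v list \<Rightarrow> 'k::comm_ring_1)"
  by (rule ext) (simp add: tensor_apply_simps)

lemma tsmul_zero_left [simp]: "tsmul 0 u = (0 :: 'v list \<Rightarrow> 'k::comm_ring_1)"
  by (rule ext) (simp add: tensor_apply_simps)

lemma tsmul_one [simp]: "tsmul 1 u = (u :: 'v list \<Rightarrow> 'k::comm_ring_1)"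
  by (rule ext) (simp add: tensor_apply_simps)

lemma tsmul_tsmul [simp]: "tsmul c (tsmul d u) = tsmul (c * d) (u :: 'v list \<Rightarrow> 'k::comm_ring_1)"
  by (rule ext) (simp add: tensor_apply_simps)

lemma tsmul_uminus_left: "tsmul (- c) u = - tsmul c (u :: 'v list \<Rightarrow> 'k::comm_ring_1)"
  by (rule ext) (simp add: tensor_apply_simps)

lemma tsmul_add_left: "tsmul (c + d) u = tsmul c u + tsmul d (u :: 'v list \<Rightarrow> 'k::comm_ring_1)"
  by (rule ext) (simp add: tensor_apply_simps algebra_simps)

lemma tsmul_sum: "tsmul c (\<Sum>i\<in>I. g i) = (\<Sum>i\<in>I. tsmul c (g i :: 'v list \<Rightarrow> 'k::comm_ring_1))"
  by (induction I rule: infinite_finite_induct) auto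

lemma tsingle_expansion:
  assumes "finsupp u"
  shows "u = (\<Sum>w\<in>tsupp u. tsmul (u w) (tsingle w :: 'v list \<Rightarrow> 'k::comm_ring_1))"
proof
  fix x
  have "(\<Sum>w\<in>tsupp u. tsmul (u w) (tsingle w)) x = (\<Sum>w\<in>tsupp u. if x = w then u w else 0)"
    unfolding tensor_apply_simps by (rule sum.cong) (auto simp: tsingle_def)
  also have "\<dots> = u x"
    using assms by (simp add: tsupp_def)
  finally show "u x = (\<Sum>w\<in>tsupp u. tsmul (u w) (tsingle w)) x" by simp
qed

lemma lin_ext_eq_sum_superset:
  assumes "finite S" "tsupp u \<subseteq> S"
  shows "lin_ext L u = (\<Sum>w\<in>S. tsmul (u w) (L w))"
  unfolding lin_ext_def
  by (rule sum.mono_neutral_left) (use assms in \<open>auto simp: tsupp_def\<close>)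

lemma lin_ext_tsingle [simp]: "lin_ext L (tsingle w :: 'v list \<Rightarrow> 'k::comm_ring_1) = L w"
  using lin_ext_eq_sum_superset[of "{w}" "tsingle w" L] by (simp add: tsupp_def tsingle_def)

text \<open>Linearity is only required on finitely supported arguments, the genuine elements of the
  free module: lin_ext sums over tsupp u and is meaningless when that set is infinite.\<close>

definition tlinear :: "(('v list \<Rightarrow> 'k::comm_ring_1) \<Rightarrow> 'v list \<Rightarrow> 'k) \<Rightarrow> bool" where
  "tlinear T \<longleftrightarrow> (\<forall>u. finsupp u \<longrightarrow> finsupp (T u)) \<and>
     (\<forall>u v. finsupp u \<longrightarrow> finsupp v \<longrightarrow> T (u + v) = T u + T v) \<and>
     (\<forall>c u. finsupp u \<longrightarrow> T (tsmul c u) = tsmul c (T u))"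

lemma tlinear_finsupp: "tlinear T \<Longrightarrow> finsupp u \<Longrightarrow> finsupp (T u)"
  by (simp add: tlinear_def)

lemma tlinear_add: "tlinear T \<Longrightarrow> finsupp u \<Longrightarrow> finsupp v \<Longrightarrow> T (u + v) = T u + T v"
  by (simp add: tlinear_def)

lemma tlinear_tsmul: "tlinear T \<Longrightarrow> finsupp u \<Longrightarrow> T (tsmul c u) = tsmul c (T u)"
  by (simp add: tlinear_def)

lemma tlinear_zero: "tlinear T \<Longrightarrow> T 0 = 0"
  using tlinear_tsmul[of T 0 0] by simp

lemma tlinear_uminus: "tlinear T \<Longrightarrow> finsupp u \<Longrightarrow> T (- u) = - T u"
  using tlinear_tsmul[of T u "-1"] by (simp add: tsmul_uminus_left)

lemma tlinear_diff: "tlinear T \<Longrightarrow> finsupp u \<Longrightarrow> finsupp v \<Longrightarrow> T (u - v) = T u - T v"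
  using tlinear_add[of T u "- v"] tlinear_uminus[of T v] by simp

lemma tlinear_sum:
  "tlinear T \<Longrightarrow> (\<And>i. i \<in> I \<Longrightarrow> finsupp (g i)) \<Longrightarrow> T (\<Sum>i\<in>I. g i) = (\<Sum>i\<in>I. T (g i))"
  by (induction I rule: infinite_finite_induct) (auto simp: tlinear_zero tlinear_add finsupp_sum)

lemma tlinear_expansion:
  assumes "tlinear T" "finsupp u"
  shows "T u = (\<Sum>w\<in>tsupp u. tsmul (u w) (T (tsingle w)))"
  using assms by (subst tsingle_expansion) (simp_all add: tlinear_sum tlinear_tsmul)

lemma tlinear_eqI:
  assumes "tlinear S" "tlinear T" "\<And>w. S (tsingle w) = T (tsingle w)" "finsupp u"
  shows "S u = T u"
  using assms(1,2,4) tlinear_expansion[of S u] tlinear_expansion[of T u] by (simp only: assms(3))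

lemma tlinear_lin_ext:
  assumes "\<And>w. finsupp (L w)"
  shows "tlinear (lin_ext L)"
  unfolding tlinear_def
proof (intro conjI allI impI)
  fix u :: "'a list \<Rightarrow> 'b" assume "finsupp u"
  then show "finsupp (lin_ext L u)"
    unfolding lin_ext_def by (intro finsupp_sum) (simp add: assms)
next
  fix u v :: "'a list \<Rightarrow> 'b" assume "finsupp u" "finsupp v"
  then have "lin_ext L w = (\<Sum>w'\<in>tsupp u \<union> tsupp v. tsmul (w w') (L w'))"
    if "w \<in> {u, v, u + v}" for w
    using that by (intro lin_ext_eq_sum_superset) (auto simp: tensor_apply_simps tsupp_def)
  then show "lin_ext L (u + v) = lin_ext L u + lin_ext L v"
    by (simp add: tensor_apply_simps tsmul_add_left sum.distrib)
next
  fix c and u :: "'a list \<Rightarrow> 'b" assume "finsupp u"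
  then have "lin_ext L (tsmul c u) = (\<Sum>w\<in>tsupp u. tsmul (tsmul c u w) (L w))"
    by (intro lin_ext_eq_sum_superset) (auto simp: tensor_apply_simps tsupp_def)
  then show "lin_ext L (tsmul c u) = tsmul c (lin_ext L u)"
    by (simp add: lin_ext_def tsmul_sum tsmul_apply)
qed

lemma tlinear_id: "tlinear id"
  by (simp add: tlinear_def)

lemma tlinear_comp: "tlinear S \<Longrightarrow> tlinear T \<Longrightarrow> tlinear (S \<circ> T)"
  by (simp add: tlinear_def)

lemma tlinear_funpow: "tlinear T \<Longrightarrow> tlinear (T ^^ n)"
  by (induction n) (simp_all add: tlinear_id tlinear_comp)

lemma tlinear_plus: "tlinear S \<Longrightarrow> tlinear T \<Longrightarrow> tlinear (\<lambda>u. S u + T u)"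
  by (simp add: tlinear_def algebra_simps)

lemma tlinear_minus: "tlinear S \<Longrightarrow> tlinear T \<Longrightarrow> tlinear (\<lambda>u. S u - T u)"
  by (simp add: tlinear_def algebra_simps)

lemma tlinear_uminus_fun: "tlinear T \<Longrightarrow> tlinear (\<lambda>u. - T u)"
  using tlinear_minus[of "\<lambda>_. 0" T] by (simp add: tlinear_def)

lemma tlinear_tsmul_fun: "tlinear T \<Longrightarrow> tlinear (\<lambda>u. tsmul c (T u))"
  by (simp add: tlinear_def mult.commute)

lemma tlinear_sum_fun: "(\<And>i. i \<in> I \<Longrightarrow> tlinear (T i)) \<Longrightarrow> tlinear (\<lambda>u. \<Sum>i\<in>I. T i u)"
proof (induction I rule: infinite_finite_induct)
  case (insert i I)
  then show ?case by (simp add: tlinear_plus)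
qed (simp_all add: tlinear_def)

lemma tlinear_tmul_left: "tlinear (tmul_left x)"
  by (simp add: tlinear_def)

lemma del2_eq_map_filter:
  "del2 i j w = map (nth w) (filter (\<lambda>k. k \<noteq> i \<and> k \<noteq> j) [0..<length w])"
proof -
  have "[w ! k. k \<leftarrow> ks, k \<noteq> i, k \<noteq> j] = map (nth w) (filter (\<lambda>k. k \<noteq> i \<and> k \<noteq> j) ks)"
    for ks
    by (induction ks) auto
  then show ?thesis by (simp add: del2_def)
qed

lemma del2_Cons_0_0 [simp]: "del2 0 0 (x # w) = w"
  by (simp add: del2_eq_map_filter upt_conv_Cons map_Suc_upt[symmetric] filter_map o_def
      map_nth del: upt_Suc)

lemma del2_Cons_0_Suc [simp]: "del2 0 (Suc j) (x # w) = del2 j j w"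
  by (simp add: del2_eq_map_filter upt_conv_Cons map_Suc_upt[symmetric] filter_map o_def
      del: upt_Suc)

lemma del2_Cons_Suc_Suc [simp]: "del2 (Suc i) (Suc j) (x # w) = x # del2 i j w"
  by (simp add: del2_eq_map_filter upt_conv_Cons map_Suc_upt[symmetric] filter_map o_def
      del: upt_Suc)

lemma length_del2_less: "i < length w \<Longrightarrow> length (del2 i j w) < length w"
  using length_filter_less[of i "[0..<length w]" "\<lambda>k. k \<noteq> i \<and> k \<noteq> j"]
  by (simp add: del2_eq_map_filter)

lemma contr_word_eq_sum:
  "contr_word f w = (\<Sum>k<length w. tsmul ((-1) ^ k * f (w ! k)) (tsingle (del2 k k w)))"
proof (induction w)
  case (Cons x w)
  have "contr_word f (x # w) = tsmul (f x) (tsingle w)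
      + (\<Sum>k<length w. tsmul ((-1) ^ Suc k * f ((x # w) ! Suc k))
                               (tsingle (del2 (Suc k) (Suc k) (x # w))))"
    by (simp add: Cons tmul_left_sum tsmul_uminus_left sum_negf)
  then show ?case
    by (simp only: length_Cons sum.lessThan_Suc_shift) simp
qed simp

lemma ordered_pairs_less_Suc:
  "{(i, j). i < j \<and> j < Suc n} =
     (\<lambda>j. (0, Suc j)) ` {..<n} \<union> (\<lambda>(i, j). (Suc i, Suc j)) ` {(i, j). i < j \<and> j < n}"
  (is "?L = ?A \<union> ?B")
proof
  show "?L \<subseteq> ?A \<union> ?B"
  proof
    fix p assume "p \<in> ?L"
    then obtain i j where ij: "p = (i, j)" "i < j" "j < Suc n" by blast
    then obtain j' where "j = Suc j'" by (cases j) auto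
    with ij show "p \<in> ?A \<union> ?B"
      by (cases i) (auto intro: image_eqI[of _ _ "(i - 1, j')"])
  qed
qed auto

text \<open>Splitting off the pairs (0, j) of a_F(x \<otimes> w) yields the contraction i_x(w).\<close>

lemma aF_word_Cons: "aF_word F (x # w) = tmul_left x (aF_word F w) + contr_word (F x) w"
proof -
  let ?g = "\<lambda>w (i, j). tsmul ((-1) ^ (i + j + 1) * F (w ! i) (w ! j)) (tsingle (del2 i j w))"
  have finite_pairs: "finite {(i, j). i < j \<and> j < (n::nat)}" for n
    by (rule finite_subset[of _ "{..<n} \<times> {..<n}"]) auto
  have "aF_word F (x # w) = sum (?g (x # w)) ((\<lambda>j. (0, Suc j)) ` {..<length w})
     + sum (?g (x # w)) ((\<lambda>(i, j). (Suc i, Suc j)) ` {(i, j). i < j \<and> j < length w})"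
    unfolding aF_word_def length_Cons ordered_pairs_less_Suc
    by (rule sum.union_disjoint) (auto simp: finite_pairs)
  also have "sum (?g (x # w)) ((\<lambda>j. (0, Suc j)) ` {..<length w}) = contr_word (F x) w"
    by (subst sum.reindex) (auto simp: inj_on_def contr_word_eq_sum)
  also have "sum (?g (x # w)) ((\<lambda>(i, j). (Suc i, Suc j)) ` {(i, j). i < j \<and> j < length w})
      = tmul_left x (aF_word F w)"
    by (subst sum.reindex) (auto simp: inj_on_def aF_word_def tmul_left_sum intro!: sum.cong)
  finally show ?thesis by (simp add: add.commute)
qed

lemma finsupp_contr_word [simp]: "finsupp (contr_word f w)"
  by (induction w) simp_all

lemma finsupp_aF_word [simp]: "finsupp (aF_word F w)"
  unfolding aF_word_def by (intro finsupp_sum) (auto split: prod.splits)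

lemma tlinear_contr: "tlinear (contr f)"
  unfolding contr_def by (rule tlinear_lin_ext) simp

lemma tlinear_aF: "tlinear (aF F)"
  unfolding aF_def by (rule tlinear_lin_ext) simp

lemma contr_tsingle [simp]: "contr f (tsingle w) = contr_word f w"
  by (simp add: contr_def)

lemma aF_tsingle [simp]: "aF F (tsingle w) = aF_word F w"
  by (simp add: aF_def)

lemma contr_zero [simp]: "contr f 0 = 0"
  by (rule tlinear_zero[OF tlinear_contr])

lemma aF_zero [simp]: "aF F 0 = 0"
  by (rule tlinear_zero[OF tlinear_aF])

lemma finsupp_contr [simp]: "finsupp u \<Longrightarrow> finsupp (contr f u)"
  by (rule tlinear_finsupp[OF tlinear_contr])

lemma finsupp_aF [simp]: "finsupp u \<Longrightarrow> finsupp (aF F u)"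
  by (rule tlinear_finsupp[OF tlinear_aF])

lemma finsupp_funpow_aF [simp]: "finsupp u \<Longrightarrow> finsupp ((aF F ^^ n) u)"
  by (rule tlinear_finsupp[OF tlinear_funpow[OF tlinear_aF]])

lemma contr_tmul_left:
  assumes "finsupp u"
  shows "contr f (tmul_left x u) = tsmul (f x) u - tmul_left x (contr f u)"
  using tlinear_eqI[OF _ _ _ assms, of "contr f \<circ> tmul_left x"
      "\<lambda>u. tsmul (f x) u - tmul_left x (contr f u)"]
  by (simp add: tlinear_comp tlinear_contr tlinear_tmul_left tlinear_minus tlinear_tsmul_fun
      tlinear_id[unfolded id_def] tlinear_comp[OF tlinear_tmul_left tlinear_contr, unfolded o_def])

lemma aF_tmul_left:
  assumes "finsupp u"
  shows "aF F (tmul_left x u) = tmul_left x (aF F u) + contr (F x) u"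
  using tlinear_eqI[OF _ _ _ assms, of "aF F \<circ> tmul_left x"
      "\<lambda>u. tmul_left x (aF F u) + contr (F x) u"]
  by (simp add: tlinear_comp tlinear_aF tlinear_tmul_left tlinear_plus tlinear_contr aF_word_Cons
      tlinear_comp[OF tlinear_tmul_left tlinear_aF, unfolded o_def])

lemma contr_contr_word_anticommute: "contr f (contr_word g w) = - contr g (contr_word f w)"
proof (induction w)
  case (Cons x w)
  have fg: "contr f (contr_word g (x # w)) =
      tsmul (g x) (contr_word f w) - tsmul (f x) (contr_word g w)
      + tmul_left x (contr f (contr_word g w))"
   and gf: "contr g (contr_word f (x # w)) =
      tsmul (f x) (contr_word g w) - tsmul (g x) (contr_word f w)
      + tmul_left x (contr g (contr_word f w))"
    by (simp_all add: tlinear_diff[OF tlinear_contr] tlinear_tsmul[OF tlinear_contr]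
        contr_tmul_left)
  show ?case
    unfolding fg gf Cons.IH by (simp add: algebra_simps)
qed simp

lemma contr_contr_anticommute:
  assumes "finsupp u"
  shows "contr f (contr g u) = - contr g (contr f u)"
proof -
  have "tlinear (\<lambda>u. - contr g (contr f u))"
    using tlinear_uminus_fun[OF tlinear_comp[OF tlinear_contr tlinear_contr]] by (simp add: o_def)
  then have "(contr f \<circ> contr g) u = (\<lambda>u. - contr g (contr f u)) u"
    by (intro tlinear_eqI[OF tlinear_comp[OF tlinear_contr tlinear_contr] _ _ assms])
      (simp_all add: contr_contr_word_anticommute[of f g])
  then show ?thesis by simp
qed

lemma contr_aF_word_commute: "contr f (aF_word F w) = aF F (contr_word f w)"
proof (induction w)
  case (Cons x w)
  have "contr f (aF_word F (x # w)) =
      tsmul (f x) (aF_word F w) - tmul_left x (contr f (aF_word F w))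
      - contr (F x) (contr_word f w)"
    using contr_contr_anticommute[of "tsingle w" f "F x"]
    by (simp add: aF_word_Cons tlinear_add[OF tlinear_contr] contr_tmul_left)
  moreover have "aF F (contr_word f (x # w)) =
      tsmul (f x) (aF_word F w) - tmul_left x (aF F (contr_word f w))
      - contr (F x) (contr_word f w)"
    by (simp add: tlinear_diff[OF tlinear_aF] tlinear_tsmul[OF tlinear_aF] aF_tmul_left)
  ultimately show ?case
    by (simp add: Cons.IH)
qed (simp add: aF_word_def)

lemma contr_aF_commute: "finsupp u \<Longrightarrow> contr f (aF F u) = aF F (contr f u)"
  using tlinear_eqI[of "contr f \<circ> aF F" "aF F \<circ> contr f" u]
  by (simp add: tlinear_comp tlinear_contr tlinear_aF contr_aF_word_commute)

text \<open>For n = 0 the truncated n - 1 is harmless, as its coefficient vanishes.\<close>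

lemma funpow_aF_tmul_left:
  assumes "finsupp v"
  shows "(aF F ^^ n) (tmul_left x v) =
     tmul_left x ((aF F ^^ n) v) + tsmul (of_nat n) (contr (F x) ((aF F ^^ (n - 1)) v))"
proof (induction n)
  case (Suc n)
  have "aF F (tsmul (of_nat n) (contr (F x) ((aF F ^^ (n - 1)) v)))
      = tsmul (of_nat n) (contr (F x) ((aF F ^^ n) v))"
    using assms by (cases n) (simp_all add: tlinear_tsmul[OF tlinear_aF] contr_aF_commute)
  with Suc assms show ?case
    by (simp add: tlinear_add[OF tlinear_aF] aF_tmul_left tsmul_add_left algebra_simps)
qed simp

definition exp_aF_trunc ::
    "('v \<Rightarrow> 'v \<Rightarrow> 'k::field_char_0) \<Rightarrow> nat \<Rightarrow> ('v list \<Rightarrow> 'k) \<Rightarrow> 'v list \<Rightarrow> 'k"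
  where "exp_aF_trunc F M u = (\<Sum>n<M. tsmul (1 / fact n) ((aF F ^^ n) u))"

lemma tlinear_exp_aF_trunc: "tlinear (exp_aF_trunc F M)"
  unfolding exp_aF_trunc_def[abs_def]
  by (intro tlinear_sum_fun tlinear_tsmul_fun tlinear_funpow tlinear_aF)

lemma exp_aF_trunc_tmul_left:
  assumes "finsupp v"
  shows "exp_aF_trunc F (Suc M) (tmul_left x v) =
     tmul_left x (exp_aF_trunc F (Suc M) v) + contr (F x) (exp_aF_trunc F M v)"
proof -
  have "exp_aF_trunc F (Suc M) (tmul_left x v) = tmul_left x (exp_aF_trunc F (Suc M) v)
      + (\<Sum>n<Suc M. tsmul (of_nat n / fact n) (contr (F x) ((aF F ^^ (n - 1)) v)))"
    using assms
    by (simp add: exp_aF_trunc_def funpow_aF_tmul_left tmul_left_sum sum.distrib)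
  also have "(\<Sum>n<Suc M. tsmul (of_nat n / fact n) (contr (F x) ((aF F ^^ (n - 1)) v)))
      = (\<Sum>n<M. tsmul (1 / fact n) (contr (F x) ((aF F ^^ n) v)))"
    by (simp only: sum.lessThan_Suc_shift) (simp del: of_nat_Suc add: field_simps)
  also have "\<dots> = contr (F x) (exp_aF_trunc F M v)"
    using assms
    by (simp add: exp_aF_trunc_def tlinear_sum[OF tlinear_contr] tlinear_tsmul[OF tlinear_contr])
  finally show ?thesis .
qed

definition words_shorter :: "nat \<Rightarrow> ('v list \<Rightarrow> 'k::zero) \<Rightarrow> bool"
  where "words_shorter k u \<longleftrightarrow> (\<forall>w\<in>tsupp u. length w < k)"

lemma words_shorter_aF_word: "words_shorter (length w) (aF_word F w)"
  unfolding words_shorter_def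
proof
  fix w' assume "w' \<in> tsupp (aF_word F w)"
  then obtain i j where "i < j" "j < length w"
      "tsmul ((-1) ^ (i + j + 1) * F (w ! i) (w ! j)) (tsingle (del2 i j w)) w' \<noteq> 0"
    unfolding tsupp_def aF_word_def sum_fun_apply
    by (auto elim!: sum.not_neutral_contains_not_neutral)
  then show "length w' < length w"
    by (auto simp: tsmul_apply tsingle_def length_del2_less split: if_splits)
qed

lemma words_shorter_aF:
  assumes "words_shorter (Suc k) u"
  shows "words_shorter k (aF F u)"
  unfolding words_shorter_def
proof
  fix w' assume "w' \<in> tsupp (aF F u)"
  then have "(\<Sum>w\<in>tsupp u. u w * aF_word F w w') \<noteq> 0"
    by (simp add: tsupp_def aF_def lin_ext_def sum_fun_apply tsmul_apply)
  then obtain w where "w \<in> tsupp u" "u w * aF_word F w w' \<noteq> 0"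
    by (rule sum.not_neutral_contains_not_neutral)
  then have "w \<in> tsupp u" "w' \<in> tsupp (aF_word F w)"
    by (auto simp: tsupp_def)
  with assms words_shorter_aF_word[of w F] show "length w' < k"
    by (fastforce simp: words_shorter_def)
qed

lemma funpow_aF_vanishes:
  assumes "words_shorter k u" "k \<le> n"
  shows "(aF F ^^ n) u = 0"
proof -
  have "words_shorter (k - m) ((aF F ^^ m) u)" for m
  proof (induction m)
    case (Suc m)
    then show ?case
      using words_shorter_aF[of "k - Suc m" "(aF F ^^ m) u" F]
      by (cases "m < k") (auto simp: words_shorter_def Suc_diff_Suc)
  qed (use assms(1) in simp)
  then have "words_shorter 0 ((aF F ^^ n) u)"
    using \<open>k \<le> n\<close> by (metis diff_is_0_eq)
  then show ?thesis
    by (auto simp: words_shorter_def tsupp_def zero_fun_apply)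
qed

lemma finsupp_words_shorter: "finsupp u \<Longrightarrow> \<exists>k. words_shorter k u"
  unfolding words_shorter_def
  by (metis finite_imageI finite_nat_set_iff_bounded image_eqI)

lemma Lambda_word_eq_exp_aF_trunc:
  "length w < M \<Longrightarrow> Lambda_word F w (tsingle []) = exp_aF_trunc F M (tsingle w)"
proof (induction w arbitrary: M)
  case Nil
  then obtain M' where "M = Suc M'" by (cases M) auto
  moreover have "(aF F ^^ Suc n) (tsingle []) = 0" for n
    by (simp only: funpow_Suc_right o_apply aF_tsingle)
      (simp add: aF_word_def tlinear_zero[OF tlinear_funpow[OF tlinear_aF]])
  ultimately show ?case
    unfolding exp_aF_trunc_def
    by (simp only: sum.lessThan_Suc_shift) (simp add: Lambda_word_def)
next
  case (Cons x w)
  then obtain M' where M: "M = Suc M'" and "length w < M'" by (cases M) auto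
  then have "Lambda_word F (x # w) (tsingle []) =
      tmul_left x (exp_aF_trunc F (Suc M') (tsingle w)) + contr (F x) (exp_aF_trunc F M' (tsingle w))"
    using Cons.IH[of M'] Cons.IH[of "Suc M'"] by (simp add: Lambda_word_def Lambda_gen_def)
  also have "\<dots> = exp_aF_trunc F M (tsingle (x # w))"
    using exp_aF_trunc_tmul_left[of "tsingle w" F M' x] by (simp add: M)
  finally show ?case .
qed

lemma lambdaF_eq_exp_aF_trunc:
  assumes "finsupp u" "words_shorter M u"
  shows "lambdaF F u = exp_aF_trunc F M u"
proof -
  have "lambdaF F u = (\<Sum>w\<in>tsupp u. tsmul (u w) (Lambda_word F w (tsingle [])))"
    by (simp add: lambdaF_def lin_ext_def)
  also have "\<dots> = (\<Sum>w\<in>tsupp u. tsmul (u w) (exp_aF_trunc F M (tsingle w)))"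
  proof (rule sum.cong)
    fix w assume "w \<in> tsupp u"
    with assms(2) have "length w < M" by (simp add: words_shorter_def)
    then show "tsmul (u w) (Lambda_word F w (tsingle [])) = tsmul (u w) (exp_aF_trunc F M (tsingle w))"
      by (simp add: Lambda_word_eq_exp_aF_trunc)
  qed simp
  also have "\<dots> = exp_aF_trunc F M u"
    by (rule tlinear_expansion[OF tlinear_exp_aF_trunc assms(1), symmetric])
  finally show ?thesis .
qed

lemma tensor_rel_sum: "(\<And>i. i \<in> I \<Longrightarrow> g i \<in> tensor_rel scale) \<Longrightarrow> sum g I \<in> tensor_rel scale"
  by (induction I rule: infinite_finite_induct) (auto intro: tensor_rel.zero tensor_rel.add)

lemma lambdaF_diff_exp_aF_trunc_in_tensor_rel:
  assumes "finsupp u" "words_shorter K u"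
    and tail: "\<forall>n\<ge>N. (aF F ^^ n) u \<in> tensor_rel scale"
  shows "lambdaF F u - exp_aF_trunc F N u \<in> tensor_rel scale"
proof -
  have "lambdaF F u = exp_aF_trunc F (max N K) u"
    using assms(1,2) by (intro lambdaF_eq_exp_aF_trunc) (auto simp: words_shorter_def)
  also have "\<dots> = exp_aF_trunc F N u + (\<Sum>n\<in>{N..<max N K}. tsmul (1 / fact n) ((aF F ^^ n) u))"
    unfolding exp_aF_trunc_def lessThan_atLeast0
    by (rule sum.atLeastLessThan_concat[symmetric]) simp_all
  finally have "lambdaF F u - exp_aF_trunc F N u
      = (\<Sum>n\<in>{N..<max N K}. tsmul (1 / fact n) ((aF F ^^ n) u))"
    by simp
  also have "\<dots> \<in> tensor_rel scale"
    using tail by (intro tensor_rel_sum tensor_rel.smul) simp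
  finally show ?thesis .
qed

theorem mainTheorem7:
  fixes scale :: "'k::field_char_0 \<Rightarrow> 'v::ab_group_add \<Rightarrow> 'v"
    and F :: "'v \<Rightarrow> 'v \<Rightarrow> 'k"
    and u :: "'v list \<Rightarrow> 'k"
  assumes "vector_space scale"
    and "bilinear_form scale F"
    and "finite (tsupp u)"
  shows "(\<exists>N. \<forall>n\<ge>N. (aF F ^^ n) u \<in> tensor_rel scale) \<and>
         (\<forall>N. (\<forall>n\<ge>N. (aF F ^^ n) u \<in> tensor_rel scale) \<longrightarrow>
           lambdaF F u - (\<Sum>n<N. tsmul (1 / fact n) ((aF F ^^ n) u)) \<in> tensor_rel scale)"
proof -
  obtain K where K: "words_shorter K u"
    using finsupp_words_shorter[OF assms(3)] ..
  then have "\<forall>n\<ge>K. (aF F ^^ n) u \<in> tensor_rel scale"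
    using funpow_aF_vanishes[OF K] by (simp add: tensor_rel.zero)
  moreover have "lambdaF F u - exp_aF_trunc F N u \<in> tensor_rel scale"
    if "\<forall>n\<ge>N. (aF F ^^ n) u \<in> tensor_rel scale" for N
    using lambdaF_diff_exp_aF_trunc_in_tensor_rel[OF assms(3) K that] .
  ultimately show ?thesis
    unfolding exp_aF_trunc_def by blast
qed

end
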